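(* Let $k,n,q\in\mathbb{N}\cup\{0\}$. If $f$ is a $(k,n)$-continuous function and $g$ is an $(n,q)$-continuous function on $\mathbb{R}^{\mathbb{Z}_<}$, then $f\circ g$ is $(k,q)$-continuous.
   Context: $\mathbb{R}^{\mathbb{Z}_<}$ is the set of formal series $\sum_{i\ge -k}a_i\epsilon^i$ ($k\in\mathbb{N}\cup\{0\}$, $a_i\in\mathbb{R}$), with coefficientwise addition, Cauchy-product multiplication and lexicographic order; $|\cdot|$ is the associated absolute value. For $p\in\mathbb{N}\cup\{0\}$, $\Delta^p=\{a\epsilon^p:a\in\mathbb{R}\}$ (with $a\ne0$ when $p\ge1$). A function $f$ is $(k,n)$-continuous at $\mathbf{c}$ iff for every positive $\iota_1\in\Delta^k$ there is a positive $\iota_2\in\Delta^n$ such that $|\mathbf{x}-\mathbf{c}|<\iota_2$ implies $|f(\mathbf{x})-f(\mathbf{c})|<\iota_1$; $f$ is $(k,n)$-continuous iff it is $(k,n)$-continuous at every point of its domain. *)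

theory Defs
  imports "HOL-Analysis.Analysis" "HOL-Computational_Algebra.Formal_Laurent_Series"
begin

text \<open>The field R^{Z<} is modelled by real formal Laurent series (finitely many negative
powers), type real fls; fls_X plays the role of epsilon.  The lexicographic order:
a nonzero series is positive iff its lowest nonzero coefficient is positive.\<close>

definition lpos :: "real fls \<Rightarrow> bool" where
  "lpos x \<longleftrightarrow> x \<noteq> 0 \<and> fls_nth x (fls_subdegree x) > 0"

definition lless :: "real fls \<Rightarrow> real fls \<Rightarrow> bool" where
  "lless x y \<longleftrightarrow> lpos (y - x)"

definition labs :: "real fls \<Rightarrow> real fls" where
  "labs x = (if lpos x \<or> x = 0 then x else - x)"

definition Delta :: "nat \<Rightarrow> real fls set" where
  "Delta p = {fls_const a * fls_X ^ p | a. p \<ge> 1 \<longrightarrow> a \<noteq> 0}"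

definition kn_cont_at :: "nat \<Rightarrow> nat \<Rightarrow> (real fls \<Rightarrow> real fls) \<Rightarrow> real fls \<Rightarrow> bool" where
  "kn_cont_at k n f c \<longleftrightarrow>
     (\<forall>\<iota>1 \<in> Delta k. lless 0 \<iota>1 \<longrightarrow>
        (\<exists>\<iota>2 \<in> Delta n. lless 0 \<iota>2 \<and>
           (\<forall>x. lless (labs (x - c)) \<iota>2 \<longrightarrow> lless (labs (f x - f c)) \<iota>1)))"

definition kn_cont :: "nat \<Rightarrow> nat \<Rightarrow> (real fls \<Rightarrow> real fls) \<Rightarrow> bool" where
  "kn_cont k n f \<longleftrightarrow> (\<forall>c. kn_cont_at k n f c)"

end

theory Submission
  imports Defs
begin

lemma kn_cont_at_compose:
  assumes f: "kn_cont_at k n f (g c)" and g: "kn_cont_at n q g c"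
  shows "kn_cont_at k q (f \<circ> g) c"
  unfolding kn_cont_at_def
proof (intro ballI impI)
  fix \<iota>1 assume "\<iota>1 \<in> Delta k" "lless 0 \<iota>1"
  with f obtain \<iota>2 where "\<iota>2 \<in> Delta n" "lless 0 \<iota>2"
    and f_close: "\<And>y. lless (labs (y - g c)) \<iota>2 \<Longrightarrow> lless (labs (f y - f (g c))) \<iota>1"
    unfolding kn_cont_at_def by blast
  with g obtain \<iota>3 where "\<iota>3 \<in> Delta q" "lless 0 \<iota>3"
    and g_close: "\<And>x. lless (labs (x - c)) \<iota>3 \<Longrightarrow> lless (labs (g x - g c)) \<iota>2"
    unfolding kn_cont_at_def by blast
  then show "\<exists>\<iota>2\<in>Delta q. lless 0 \<iota>2 \<and>
      (\<forall>x. lless (labs (x - c)) \<iota>2 \<longrightarrow> lless (labs ((f \<circ> g) x - (f \<circ> g) c)) \<iota>1)"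
    using f_close by auto
qed

theorem mainTheorem11:
  fixes k n q :: nat and f g :: "real fls \<Rightarrow> real fls"
  assumes "kn_cont k n f" and "kn_cont n q g"
  shows "kn_cont k q (f \<circ> g)"
  using assms kn_cont_at_compose unfolding kn_cont_def by blast

end
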